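(* Let $v\in\mathbb{R}^2$ and let $f\in\mathrm{CPA}_p$ be a $v$-function with $p\ge3$ pieces. Then $f=\sum_{n=1}^{p-2}f^{(n)}$, where each $f^{(n)}\in\mathrm{CPA}_3$ is a $v$-function.
   Context: For $v,u\in\mathbb{R}^2$, $u\ne0$: a line segment $\{v+tu:t\in[0,1]\}$, a ray $\{v+tu:t\ge0\}$ (vertex $v$), a line $\{v+tu:t\in\mathbb{R}\}$. A polygonal arc is a line, or a set homeomorphic to a line which is the union of two rays and finitely many segments, any two disjoint or meeting in a common vertex; a polygonal cycle is a set homeomorphic to a circle which is a finite union of segments, any two disjoint or meeting only in a vertex of both. A polygon is a closed $P\subseteq\mathbb{R}^2$ with connected interior whose boundary is the union of finitely many polygonal arcs and cycles (with chosen edge sets), any two meeting in the empty set or a vertex of both. A continuous $f:\mathbb{R}^2\to\mathbb{R}$ is continuous piecewise affine (CPA) with admissible pieces $\mathcal{P}$ if $\mathcal{P}$ is a finite set of polygons covering $\mathbb{R}^2$, $P\cap Q=\partial P\cap\partial Q$ for distinct pieces, every vertex of a piece is a vertex of every piece containing it, and $f$ is affine on each piece. $\mathrm{CPA}_p$ is the set of CPA functions admitting an admissible set of $p$ pieces. A CPA function is a $v$-function if (for its admissible pieces) $v$ is its only vertex and all its edges are rays. *)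

theory Defs
  imports "HOL-Analysis.Analysis"
begin

type_synonym pt = "real^2"

definition is_segment :: "pt set \<Rightarrow> bool" where
  "is_segment S \<longleftrightarrow> (\<exists>v u. u \<noteq> 0 \<and> S = {v + t *\<^sub>R u | t. 0 \<le> t \<and> t \<le> 1})"

definition is_ray :: "pt set \<Rightarrow> bool" where
  "is_ray S \<longleftrightarrow> (\<exists>v u. u \<noteq> 0 \<and> S = {v + t *\<^sub>R u | t. 0 \<le> t})"

definition is_line :: "pt set \<Rightarrow> bool" where
  "is_line S \<longleftrightarrow> (\<exists>v u. u \<noteq> 0 \<and> S = {v + t *\<^sub>R u | t. True})"

definition edge_vertex :: "pt \<Rightarrow> pt set \<Rightarrow> bool" where
  "edge_vertex w S \<longleftrightarrow> (\<exists>u. u \<noteq> 0 \<and>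
      (S = {w + t *\<^sub>R u | t. 0 \<le> t \<and> t \<le> 1} \<or> S = {w + t *\<^sub>R u | t. 0 \<le> t}))"

definition edges_vertices :: "pt set set \<Rightarrow> pt set" where
  "edges_vertices E = {w. \<exists>e\<in>E. edge_vertex w e}"

definition edges_meet_ok :: "pt set \<Rightarrow> pt set \<Rightarrow> bool" where
  "edges_meet_ok A B \<longleftrightarrow> A \<inter> B = {} \<or>
     (\<exists>w. A \<inter> B = {w} \<and> edge_vertex w A \<and> edge_vertex w B)"

definition polygonal_arc :: "pt set set \<Rightarrow> bool" where
  "polygonal_arc E \<longleftrightarrow> finite E \<and>
     ((\<exists>L. is_line L \<and> E = {L}) \<or>
      (\<Union>E homeomorphic (UNIV :: real set) \<and>
       (\<forall>e\<in>E. is_ray e \<or> is_segment e) \<and>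
       card {e\<in>E. is_ray e} = 2 \<and>
       pairwise edges_meet_ok E))"

definition polygonal_cycle :: "pt set set \<Rightarrow> bool" where
  "polygonal_cycle E \<longleftrightarrow> finite E \<and> (\<forall>e\<in>E. is_segment e) \<and>
     \<Union>E homeomorphic sphere (0 :: pt) 1 \<and> pairwise edges_meet_ok E"

text \<open>A polygon P together with its chosen boundary structure Cs
  (a finite set of polygonal arcs and cycles, each given by its edge set).\<close>
definition polygon :: "pt set \<Rightarrow> pt set set set \<Rightarrow> bool" where
  "polygon P Cs \<longleftrightarrow> closed P \<and> interior P \<noteq> {} \<and> connected (interior P) \<and>
     finite Cs \<and> (\<forall>C\<in>Cs. polygonal_arc C \<or> polygonal_cycle C) \<and>
     frontier P = \<Union>(\<Union>Cs) \<and>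
     (\<forall>C\<in>Cs. \<forall>D\<in>Cs. C \<noteq> D \<longrightarrow>
        \<Union>C \<inter> \<Union>D = {} \<or>
        (\<exists>w. \<Union>C \<inter> \<Union>D = {w} \<and> w \<in> edges_vertices C \<and> w \<in> edges_vertices D))"

type_synonym piece = "pt set \<times> pt set set set"

definition piece_edges :: "piece \<Rightarrow> pt set set" where
  "piece_edges A = \<Union>(snd A)"

definition piece_vertices :: "piece \<Rightarrow> pt set" where
  "piece_vertices A = edges_vertices (piece_edges A)"

definition CPA_pieces :: "(pt \<Rightarrow> real) \<Rightarrow> piece set \<Rightarrow> bool" where
  "CPA_pieces f \<P> \<longleftrightarrow> continuous_on UNIV f \<and> finite \<P> \<and>
     (\<forall>A\<in>\<P>. polygon (fst A) (snd A)) \<and>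
     \<Union>(fst ` \<P>) = UNIV \<and>
     (\<forall>A\<in>\<P>. \<forall>B\<in>\<P>. A \<noteq> B \<longrightarrow> fst A \<inter> fst B = frontier (fst A) \<inter> frontier (fst B)) \<and>
     (\<forall>A\<in>\<P>. \<forall>B\<in>\<P>. \<forall>w\<in>piece_vertices A. w \<in> fst B \<longrightarrow> w \<in> piece_vertices B) \<and>
     (\<forall>A\<in>\<P>. \<exists>(a::pt) (c::real). \<forall>x\<in>fst A. f x = a \<bullet> x + c)"

definition CPA :: "nat \<Rightarrow> (pt \<Rightarrow> real) set" where
  "CPA p = {f. \<exists>\<P>. CPA_pieces f \<P> \<and> card \<P> = p}"

definition v_function :: "pt \<Rightarrow> piece set \<Rightarrow> bool" where
  "v_function v \<P> \<longleftrightarrow> (\<Union>A\<in>\<P>. piece_vertices A) = {v} \<and>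
     (\<forall>A\<in>\<P>. \<forall>e\<in>piece_edges A. is_ray e)"

end

(*
  Around v, a v-function f is linear on every sector between two consecutive edge rays, and
  each open sector lies in the interior of a piece of its own, so there are at most p sectors.
  After adding rays until there are at least three, sort them by angle
  theta_0 < ... < theta_l < theta_0 + 2 pi, starting at a ray such that theta_l is not antipodal
  to theta_0, and let a_i be the gradient of f on the i-th sector. For 1 <= n <= l - 1 the n-th
  summand is the three-piece v-function with rays theta_0, theta_n, theta_l and gradients 0,
  a_n - a_(n-1) and m_n on its three sectors (plus a_0 when n = 1), where m_n is orthogonal to
  theta_0 and agrees with a_n - a_(n-1) on theta_l. On the j-th sector the gradients add up to
  a_j by telescoping; on the last one the m_n add up to a_l - a_0, because both vectors have the
  same inner products with the independent directions theta_0 and theta_l. The remaining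
  summands are zero.
*)
theory Submission
  imports Defs
begin

section \<open>Polar coordinates\<close>

definition dir :: "real \<Rightarrow> real^2" where
  "dir t = vector [cos t, sin t]"

lemma dir_nth [simp]: "dir t $ 1 = cos t" "dir t $ 2 = sin t"
  by (simp_all add: dir_def)

lemma inner_real2: "(x::real^2) \<bullet> y = x$1 * y$1 + x$2 * y$2"
  by (simp add: inner_vec_def sum_2)

lemma real2_eq_iff: "(x::real^2) = y \<longleftrightarrow> x$1 = y$1 \<and> x$2 = y$2"
  by (simp add: vec_eq_iff forall_2)

lemma inner_dir: "dir s \<bullet> dir t = cos (s - t)"
  by (simp add: inner_real2 cos_diff)

lemma inner_dir_self [simp]: "dir t \<bullet> dir t = 1"
  by (simp add: inner_dir)

lemma norm_dir [simp]: "norm (dir t) = 1"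
  by (simp add: norm_eq_sqrt_inner inner_dir)

lemma dir_nonzero [simp]: "dir t \<noteq> 0"
  using norm_dir[of t] by (metis norm_zero zero_neq_one)

lemma dir_periodic: "dir (t + 2*pi * of_int m) = dir t"
  by (simp add: real2_eq_iff cos_add sin_add)

lemma dir_add_2pi [simp]: "dir (t + 2*pi) = dir t"
  using dir_periodic[of t 1] by simp

lemma dir_diff_2pi [simp]: "dir (t - 2*pi) = dir t"
  using dir_periodic[of t "-1"] by simp

lemma continuous_on_dir [continuous_intros]:
  fixes f :: "'a::t2_space \<Rightarrow> real"
  assumes "continuous_on S f"
  shows "continuous_on S (\<lambda>x. dir (f x))"
proof -
  have eq: "(\<lambda>x. dir (f x)) = (\<lambda>x. cos (f x) *\<^sub>R axis 1 1 + sin (f x) *\<^sub>R axis 2 1)"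
    by (auto simp: real2_eq_iff axis_def)
  show ?thesis unfolding eq using assms by (intro continuous_intros)
qed

lemma dir_eq_imp_2pi_multiple:
  assumes "dir s = dir t"
  shows "\<exists>m::int. s = t + 2*pi*m"
proof -
  have "cos (s - t) = 1"
    using inner_dir[of s t] inner_dir[of t t] assms by simp
  then obtain n :: int where "s - t = of_int n * 2 * pi"
    using cos_one_2pi_int by auto
  then show ?thesis by (intro exI[of _ n]) (simp add: algebra_simps)
qed

lemma dir_neq:
  assumes "a < b" "b < a + 2*pi"
  shows "dir a \<noteq> dir b"
proof
  assume "dir a = dir b"
  then obtain m :: int where "b = a + 2*pi*m"
    using dir_eq_imp_2pi_multiple by metis
  then have "0 < m" "m < 1"
    using assms pi_gt_zero by (simp_all add: zero_less_mult_iff)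
  then show False by linarith
qed

lemma polar_form:
  fixes y :: "real^2"
  assumes "y \<noteq> 0"
  shows "\<exists>t. a \<le> t \<and> t < a + 2*pi \<and> y = norm y *\<^sub>R dir t"
proof -
  define u where "u = y /\<^sub>R norm y"
  have "norm u = 1"
    using assms by (simp add: u_def)
  then have "(u$1)\<^sup>2 + (u$2)\<^sup>2 = 1"
    by (simp add: norm_eq_sqrt_inner inner_real2 power2_eq_square)
  then obtain t0 where t0: "u$1 = cos t0" "u$2 = sin t0"
    using sincos_total_2pi by metis
  define n where "n = \<lceil>(a - t0) / (2*pi)\<rceil>"
  have "(a - t0) / (2*pi) \<le> n" "n < (a - t0) / (2*pi) + 1"
    unfolding n_def by linarith+
  then have "a - t0 \<le> 2*pi*n" "2*pi*n < a - t0 + 2*pi"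
    using pi_gt_zero by (simp_all add: field_simps)
  moreover have "y = norm y *\<^sub>R dir (t0 + 2*pi*n)"
  proof -
    have "u = dir t0" using t0 by (simp add: real2_eq_iff)
    moreover have "y = norm y *\<^sub>R u" using assms by (simp add: u_def)
    ultimately show ?thesis by (simp add: dir_periodic)
  qed
  ultimately show ?thesis by (intro exI[of _ "t0 + 2*pi*n"]) auto
qed

lemma polar_eq_iff:
  assumes "y \<noteq> 0" "y = norm y *\<^sub>R dir t" "0 \<le> r"
  shows "y = r *\<^sub>R dir s \<longleftrightarrow> r = norm y \<and> (\<exists>m::int. s = t + 2*pi*m)"
proof
  assume y: "y = r *\<^sub>R dir s"
  then have r: "r = norm y" using assms(3) by simp
  then have "dir s = dir t" using assms y by (metis norm_eq_zero scaleR_cancel_left)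
  then show "r = norm y \<and> (\<exists>m::int. s = t + 2*pi*m)"
    using r dir_eq_imp_2pi_multiple by blast
next
  assume "r = norm y \<and> (\<exists>m::int. s = t + 2*pi*m)"
  then show "y = r *\<^sub>R dir s" using assms(2) by (auto simp: dir_periodic)
qed

lemma exists_2pi_shift_in_window:
  assumes "a \<le> t" "t < a + 2*pi" "\<And>s. P s \<Longrightarrow> a \<le> s \<and> s < a + 4*pi"
  shows "(\<exists>m::int. P (t + 2*pi*m)) \<longleftrightarrow> P t \<or> P (t + 2*pi)"
proof
  assume "\<exists>m::int. P (t + 2*pi*m)"
  then obtain m :: int where m: "P (t + 2*pi*m)" by blast
  then have "2*pi * (-1) < 2*pi * m" "2*pi * m < 2*pi * 2"
    using assms(1,2) assms(3)[OF m] by linarith+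
  then have "-1 < m" "m < 2"
    using mult_less_cancel_left_pos[of "2*pi" "-1" m] mult_less_cancel_left_pos[of "2*pi" m 2] pi_gt_zero
    by auto
  then have "m = 0 \<or> m = 1" by linarith
  then show "P t \<or> P (t + 2*pi)" using m by auto
next
  assume "P t \<or> P (t + 2*pi)"
  then show "\<exists>m::int. P (t + 2*pi*m)"
    using exI[of "\<lambda>m::int. P (t + 2*pi*m)" 0] exI[of "\<lambda>m::int. P (t + 2*pi*m)" 1] by auto
qed

section \<open>Sectors and rays\<close>

definition sector :: "pt \<Rightarrow> real \<Rightarrow> real \<Rightarrow> pt set" where
  "sector v a b = {v + r *\<^sub>R dir t | r t. 0 \<le> r \<and> a \<le> t \<and> t \<le> b}"

definition open_sector :: "pt \<Rightarrow> real \<Rightarrow> real \<Rightarrow> pt set" where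
  "open_sector v a b = {v + r *\<^sub>R dir t | r t. 0 < r \<and> a < t \<and> t < b}"

definition ray :: "pt \<Rightarrow> real \<Rightarrow> pt set" where
  "ray v a = {v + r *\<^sub>R dir a | r. 0 \<le> r}"

lemma ray_eq_sector: "ray v a = sector v a a"
  unfolding ray_def sector_def by auto

lemma mem_sector_iff:
  assumes "y \<noteq> 0" "y = norm y *\<^sub>R dir t"
  shows "v + y \<in> sector v c d \<longleftrightarrow> (\<exists>m::int. c \<le> t + 2*pi*m \<and> t + 2*pi*m \<le> d)"
proof -
  have "v + y \<in> sector v c d \<longleftrightarrow> (\<exists>r s. y = r *\<^sub>R dir s \<and> 0 \<le> r \<and> c \<le> s \<and> s \<le> d)"
    unfolding sector_def by auto
  also have "\<dots> \<longleftrightarrow> (\<exists>m::int. c \<le> t + 2*pi*m \<and> t + 2*pi*m \<le> d)"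
    using polar_eq_iff[OF assms] by (metis norm_ge_zero)
  finally show ?thesis .
qed

lemma mem_open_sector_iff:
  assumes "y \<noteq> 0" "y = norm y *\<^sub>R dir t"
  shows "v + y \<in> open_sector v c d \<longleftrightarrow> (\<exists>m::int. c < t + 2*pi*m \<and> t + 2*pi*m < d)"
proof -
  have "v + y \<in> open_sector v c d \<longleftrightarrow> (\<exists>r s. y = r *\<^sub>R dir s \<and> 0 < r \<and> c < s \<and> s < d)"
    unfolding open_sector_def by auto
  also have "\<dots> \<longleftrightarrow> (\<exists>m::int. c < t + 2*pi*m \<and> t + 2*pi*m < d)"
    using polar_eq_iff[OF assms] assms(1) by (metis less_imp_le zero_less_norm_iff)
  finally show ?thesis .
qed

lemma mem_sector_window_iff:
  assumes "y \<noteq> 0" "y = norm y *\<^sub>R dir t" "a \<le> t" "t < a + 2*pi" "a \<le> c" "d < a + 4*pi"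
  shows "v + y \<in> sector v c d \<longleftrightarrow> (c \<le> t \<and> t \<le> d) \<or> (c \<le> t + 2*pi \<and> t + 2*pi \<le> d)"
  unfolding mem_sector_iff[OF assms(1,2)]
  using exists_2pi_shift_in_window[OF assms(3,4), of "\<lambda>s. c \<le> s \<and> s \<le> d"] assms(5,6) by auto

lemma mem_open_sector_window_iff:
  assumes "y \<noteq> 0" "y = norm y *\<^sub>R dir t" "a \<le> t" "t < a + 2*pi" "a \<le> c" "d < a + 4*pi"
  shows "v + y \<in> open_sector v c d \<longleftrightarrow> (c < t \<and> t < d) \<or> (c < t + 2*pi \<and> t + 2*pi < d)"
  unfolding mem_open_sector_iff[OF assms(1,2)]
  using exists_2pi_shift_in_window[OF assms(3,4), of "\<lambda>s. c < s \<and> s < d"] assms(5,6) by auto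

lemma center_in_sector: "a \<le> b \<Longrightarrow> v \<in> sector v a b"
  unfolding sector_def by force

lemma dir_in_sector: "a \<le> t \<Longrightarrow> t \<le> b \<Longrightarrow> v + dir t \<in> sector v a b"
  unfolding sector_def by (intro CollectI exI[of _ 1] exI[of _ t]) simp

lemma center_notin_open_sector: "v \<notin> open_sector v a b"
  unfolding open_sector_def by auto

lemma center_in_ray [simp]: "v \<in> ray v a"
  unfolding ray_def by force

lemma in_rayI: "0 \<le> r \<Longrightarrow> v + r *\<^sub>R dir a \<in> ray v a"
  unfolding ray_def by blast

lemma open_sector_subset_sector: "open_sector v a b \<subseteq> sector v a b"
  unfolding open_sector_def sector_def by force

lemma sector_mono: "a' \<le> a \<Longrightarrow> b \<le> b' \<Longrightarrow> sector v a b \<subseteq> sector v a' b'"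
  unfolding sector_def by force

lemma open_sector_nonempty: "a < b \<Longrightarrow> v + dir ((a + b) / 2) \<in> open_sector v a b"
  unfolding open_sector_def by (rule CollectI, rule exI[of _ 1], rule exI[of _ "(a + b) / 2"]) auto

lemma polar_set_shift_2pi:
  "{v + r *\<^sub>R dir t | r t. R r \<and> P (t - 2*pi)} = {v + r *\<^sub>R dir t | r t. R r \<and> P t}"
proof (intro set_eqI iffI)
  fix x assume "x \<in> {v + r *\<^sub>R dir t | r t. R r \<and> P (t - 2*pi)}"
  then obtain r t where "x = v + r *\<^sub>R dir t" "R r" "P (t - 2*pi)" by blast
  then show "x \<in> {v + r *\<^sub>R dir t | r t. R r \<and> P t}"
    by (intro CollectI exI[of _ r] exI[of _ "t - 2*pi"]) simp
next
  fix x assume "x \<in> {v + r *\<^sub>R dir t | r t. R r \<and> P t}"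
  then obtain r t where "x = v + r *\<^sub>R dir t" "R r" "P t" by blast
  then show "x \<in> {v + r *\<^sub>R dir t | r t. R r \<and> P (t - 2*pi)}"
    by (intro CollectI exI[of _ r] exI[of _ "t + 2*pi"]) simp
qed

lemma open_sector_shift_2pi: "open_sector v (a + 2*pi) (b + 2*pi) = open_sector v a b"
  using polar_set_shift_2pi[of v "\<lambda>r. 0 < r" "\<lambda>t. a < t \<and> t < b"]
  unfolding open_sector_def by (simp add: algebra_simps)

lemma sector_eq_image: "sector v a b = (\<lambda>z. v + fst z *\<^sub>R dir (snd z)) ` ({0..} \<times> {a..b})"
  unfolding sector_def by force

lemma open_sector_eq_image: "open_sector v a b = (\<lambda>z. v + fst z *\<^sub>R dir (snd z)) ` ({0<..} \<times> {a<..<b})"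
  unfolding open_sector_def by force

lemma closed_sector: "closed (sector v a b)"
proof -
  have "compact (dir ` {a..b})"
    by (intro compact_continuous_image continuous_intros compact_Icc)
  moreover have "0 \<notin> dir ` {a..b}" by auto
  ultimately have "closed ((+) v ` (conic hull (dir ` {a..b})))"
    using closed_conic_hull closed_translation by blast
  moreover have "(+) v ` (conic hull (dir ` {a..b})) = sector v a b"
    unfolding sector_def conic_hull_explicit by force
  ultimately show ?thesis by simp
qed

lemma closed_ray: "closed (ray v a)"
  unfolding ray_eq_sector by (rule closed_sector)

lemma connected_open_sector: "connected (open_sector v a b)"
proof -
  have "connected ({0::real<..} \<times> {a<..<b})"
    by (intro connected_Times convex_connected convex_real_interval)
  then show ?thesis unfolding open_sector_eq_image
    by (intro connected_continuous_image continuous_intros)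
qed

lemma closure_open_sector:
  assumes "a < b"
  shows "closure (open_sector v a b) = sector v a b"
proof
  show "closure (open_sector v a b) \<subseteq> sector v a b"
    by (intro closure_minimal open_sector_subset_sector closed_sector)
  have "closure ({0<..} \<times> {a<..<b}) = {0::real..} \<times> {a..b}"
    using assms by (simp add: closure_Times)
  moreover have "(\<lambda>z. v + fst z *\<^sub>R dir (snd z)) ` closure ({0<..} \<times> {a<..<b}) \<subseteq> closure (open_sector v a b)"
    unfolding open_sector_eq_image by (intro image_closure_subset continuous_intros closed_closure closure_subset)
  ultimately show "sector v a b \<subseteq> closure (open_sector v a b)"
    by (simp add: sector_eq_image)
qed

lemma Compl_sector:
  assumes "a \<le> b" "b < a + 2*pi"
  shows "- sector v a b = open_sector v b (a + 2*pi)"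
proof (rule set_eqI)
  fix x
  show "x \<in> - sector v a b \<longleftrightarrow> x \<in> open_sector v b (a + 2*pi)"
  proof (cases "x = v")
    case True
    then show ?thesis using center_notin_open_sector center_in_sector assms by auto
  next
    case False
    then obtain t where t: "x - v = norm (x - v) *\<^sub>R dir t" "a \<le> t" "t < a + 2*pi"
      using polar_form[of "x - v" a] by auto
    have "x \<in> sector v a b \<longleftrightarrow> (a \<le> t \<and> t \<le> b) \<or> (a \<le> t + 2*pi \<and> t + 2*pi \<le> b)"
      using mem_sector_window_iff[OF _ t, of a b v] False assms pi_gt_zero by simp
    moreover have "x \<in> open_sector v b (a + 2*pi) \<longleftrightarrow> (b < t \<and> t < a + 2*pi) \<or> (b < t + 2*pi \<and> t + 2*pi < a + 2*pi)"
      using mem_open_sector_window_iff[OF _ t, of b "a + 2*pi" v] False assms pi_gt_zero by simp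
    ultimately show ?thesis using t assms by auto
  qed
qed

lemma open_open_sector:
  assumes "a < b" "b \<le> a + 2*pi"
  shows "open (open_sector v a b)"
proof -
  have "open_sector v a b = - sector v b (a + 2*pi)"
    using Compl_sector[of b "a + 2*pi" v] assms by (simp add: open_sector_shift_2pi)
  then show ?thesis using closed_sector by (simp add: open_Compl)
qed

lemma interior_sector:
  assumes "a < b" "b < a + 2*pi"
  shows "interior (sector v a b) = open_sector v a b"
proof -
  have "interior (sector v a b) = - closure (- sector v a b)"
    by (simp add: interior_closure)
  also have "\<dots> = - sector v b (a + 2*pi)"
    using assms by (simp add: Compl_sector closure_open_sector)
  also have "\<dots> = open_sector v a b"
    using Compl_sector[of b "a + 2*pi" v] assms by (simp add: open_sector_shift_2pi)
  finally show ?thesis .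
qed

lemma frontier_sector:
  assumes "a < b" "b < a + 2*pi"
  shows "frontier (sector v a b) = ray v a \<union> ray v b"
proof -
  have "frontier (sector v a b) = sector v a b - open_sector v a b"
    unfolding frontier_def using interior_sector[OF assms] closed_sector by (simp add: closure_closed)
  also have "\<dots> = ray v a \<union> ray v b"
  proof (rule set_eqI)
    fix x
    show "x \<in> sector v a b - open_sector v a b \<longleftrightarrow> x \<in> ray v a \<union> ray v b"
    proof (cases "x = v")
      case True
      then show ?thesis using center_notin_open_sector center_in_sector assms by auto
    next
      case False
      then obtain t where t: "x - v = norm (x - v) *\<^sub>R dir t" "a \<le> t" "t < a + 2*pi"
        using polar_form[of "x - v" a] by auto
      have xy: "x = v + (x - v)" "x - v \<noteq> 0" using False by simp_all
      note window = mem_sector_window_iff[OF xy(2) t] mem_open_sector_window_iff[OF xy(2) t]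
      have "x \<in> sector v a b \<longleftrightarrow> a \<le> t \<and> t \<le> b"
        using window(1)[of a b v] xy(1) t assms by simp
      moreover have "x \<in> open_sector v a b \<longleftrightarrow> a < t \<and> t < b"
        using window(2)[of a b v] xy(1) t assms by simp
      moreover have "x \<in> ray v a \<longleftrightarrow> t = a"
        using window(1)[of a a v] xy(1) t assms pi_gt_zero unfolding ray_eq_sector by auto
      moreover have "x \<in> ray v b \<longleftrightarrow> t = b"
        using window(1)[of b b v] xy(1) t assms pi_gt_zero unfolding ray_eq_sector by auto
      ultimately show ?thesis using assms by auto
    qed
  qed
  finally show ?thesis .
qed

lemma ray_add_2pi [simp]: "ray v (a + 2*pi) = ray v a"
  unfolding ray_def by simp

lemma is_ray_ray: "is_ray (ray v a)"
  unfolding is_ray_def ray_def by (intro exI[of _ v] exI[of _ "dir a"]) simp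

lemma ray_Int_ray:
  assumes "dir a \<noteq> dir b"
  shows "ray v a \<inter> ray v b = {v}"
proof (intro equalityI subsetI)
  fix x assume "x \<in> ray v a \<inter> ray v b"
  then obtain r s where rs: "x = v + r *\<^sub>R dir a" "x = v + s *\<^sub>R dir b" "0 \<le> r" "0 \<le> s"
    unfolding ray_def by blast
  then have "r *\<^sub>R dir a = s *\<^sub>R dir b" by simp
  then have "r = s" using rs(3,4) by (metis abs_of_nonneg norm_dir norm_scaleR mult.right_neutral)
  then have "r = 0" using \<open>r *\<^sub>R dir a = s *\<^sub>R dir b\<close> assms by auto
  then show "x \<in> {v}" using rs(1) by simp
qed simp

lemma ray_neq:
  assumes "dir a \<noteq> dir b"
  shows "ray v a \<noteq> ray v b"
  using ray_Int_ray[OF assms, of v] in_rayI[of 1 v a] by auto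

lemma ray_dir_representative:
  "\<exists>t. \<omega> \<le> t \<and> t < \<omega> + 2*pi \<and> ray v t = ray v \<theta>"
proof -
  obtain t where t: "\<omega> \<le> t" "t < \<omega> + 2*pi" "dir \<theta> = dir t"
    using polar_form[of "dir \<theta>" \<omega>] by auto
  then have "ray v t = ray v \<theta>" unfolding ray_def by simp
  then show ?thesis using t by blast
qed

lemma ray_eq_ray_in_window:
  assumes "ray v s = ray v t" "\<omega> \<le> s" "s < \<omega> + 2*pi" "\<omega> \<le> t" "t < \<omega> + 2*pi"
  shows "s = t"
proof (rule ccontr)
  assume "s \<noteq> t"
  then have "dir s \<noteq> dir t"
    using dir_neq[of s t] dir_neq[of t s] assms(2-5) by (cases "s < t") auto
  then show False using ray_neq assms(1) by blast
qed

lemma half_line_eq_ray: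
  assumes "u \<noteq> 0" "u = norm u *\<^sub>R dir \<theta>"
  shows "{w + t *\<^sub>R u | t. 0 \<le> t} = ray w \<theta>"
proof (intro set_eqI iffI)
  fix x assume "x \<in> {w + t *\<^sub>R u | t. 0 \<le> t}"
  then obtain t where t: "x = w + t *\<^sub>R u" "0 \<le> t" by blast
  have "t *\<^sub>R u = t *\<^sub>R (norm u *\<^sub>R dir \<theta>)" by (rule arg_cong[OF assms(2)])
  then have "t *\<^sub>R u = (t * norm u) *\<^sub>R dir \<theta>" by simp
  then show "x \<in> ray w \<theta>" using t in_rayI[of "t * norm u" w \<theta>] by simp
next
  fix x assume "x \<in> ray w \<theta>"
  then obtain r where r: "x = w + r *\<^sub>R dir \<theta>" "0 \<le> r" unfolding ray_def by blast
  have "(r / norm u) *\<^sub>R u = (r / norm u) *\<^sub>R (norm u *\<^sub>R dir \<theta>)" by (rule arg_cong[OF assms(2)])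
  also have "\<dots> = r *\<^sub>R dir \<theta>" using assms(1) by simp
  finally have "(r / norm u) *\<^sub>R u = r *\<^sub>R dir \<theta>" .
  then show "x \<in> {w + t *\<^sub>R u | t. 0 \<le> t}" using r by (intro CollectI exI[of _ "r / norm u"]) simp
qed

lemma ray_reflection_in_ray:
  fixes p u x :: "'a::real_vector"
  assumes "S = {p + t *\<^sub>R u | t. 0 \<le> t}" "u \<noteq> 0" "x \<in> S" "p - (x - p) \<in> S"
  shows "x = p"
proof -
  obtain t s where ts: "x = p + t *\<^sub>R u" "p - (x - p) = p + s *\<^sub>R u" "0 \<le> t" "0 \<le> s"
    using assms(1,3,4) by blast
  then have "s *\<^sub>R u + t *\<^sub>R u = 0" by (simp add: algebra_simps)
  then have "(t + s) *\<^sub>R u = 0" by (simp add: scaleR_left_distrib add.commute)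
  then have "t = 0" using assms(2) ts(3,4) by simp
  then show ?thesis using ts(1) by simp
qed

lemma ray_unbounded: "\<not> bounded (ray v a)"
proof
  assume "bounded (ray v a)"
  then obtain B where B: "\<forall>x\<in>ray v a. norm x \<le> B" unfolding bounded_iff by blast
  define r where "r = B + norm v + 1"
  have "B \<ge> 0" using B center_in_ray[of v a] norm_ge_zero order_trans by blast
  then have "norm (v + r *\<^sub>R dir a) \<le> B" using B in_rayI[of r v a] by (simp add: r_def)
  moreover have "r - norm v \<le> norm (v + r *\<^sub>R dir a)"
    using norm_triangle_ineq2[of "r *\<^sub>R dir a" "- v"] \<open>B \<ge> 0\<close> by (simp add: r_def add.commute)
  ultimately show False unfolding r_def by simp
qed

lemma edge_vertex_ray_iff: "edge_vertex w (ray v a) \<longleftrightarrow> w = v"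
proof
  assume "edge_vertex w (ray v a)"
  then obtain u where "u \<noteq> 0" and shape:
    "ray v a = {w + t *\<^sub>R u | t. 0 \<le> t \<and> t \<le> 1} \<or> ray v a = {w + t *\<^sub>R u | t. 0 \<le> t}"
    unfolding edge_vertex_def by blast
  have "ray v a \<noteq> {w + t *\<^sub>R u | t. 0 \<le> t \<and> t \<le> 1}"
  proof
    assume "ray v a = {w + t *\<^sub>R u | t. 0 \<le> t \<and> t \<le> 1}"
    also have "\<dots> = (\<lambda>t. w + t *\<^sub>R u) ` {0..1}" by auto
    finally have "compact (ray v a)"
      by (simp add: compact_continuous_image continuous_intros)
    then show False using ray_unbounded compact_imp_bounded by blast
  qed
  then have w_ray: "ray v a = {w + t *\<^sub>R u | t. 0 \<le> t}" using shape by blast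
  have "w \<in> ray v a" unfolding w_ray by force
  then obtain r where r: "w = v + r *\<^sub>R dir a" "0 \<le> r"
    unfolding ray_def by blast
  have "w - ((v + (r + r) *\<^sub>R dir a) - w) = v"
    unfolding r(1) scaleR_left_distrib by (simp add: algebra_simps del: mult_2 mult_2_right)
  then have "w - ((v + (r + r) *\<^sub>R dir a) - w) \<in> ray v a"
    using center_in_ray[of v a] by metis
  moreover have "v + (r + r) *\<^sub>R dir a \<in> ray v a" using r(2) by (intro in_rayI) simp
  ultimately have "v + (r + r) *\<^sub>R dir a = w"
    using ray_reflection_in_ray[OF w_ray \<open>u \<noteq> 0\<close>] by blast
  then have "r = 0" using r(1) by simp
  then show "w = v" using r(1) by simp
next
  assume "w = v"
  then show "edge_vertex w (ray v a)"
    unfolding edge_vertex_def ray_def by (intro exI[of _ "dir a"]) simp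
qed

lemma ray_Un_ray_homeomorphic_line:
  assumes "dir a \<noteq> dir b"
  shows "ray v a \<union> ray v b homeomorphic (UNIV :: real set)"
proof -
  define f where "f s = (if 0 \<le> s then v + s *\<^sub>R dir a else v + (- s) *\<^sub>R dir b)" for s :: real
  define g where "g x = (if x \<in> ray v a then (x - v) \<bullet> dir a else - ((x - v) \<bullet> dir b))" for x
  have meet: "x \<in> ray v a \<Longrightarrow> x \<in> ray v b \<Longrightarrow> x = v" for x
    using ray_Int_ray[OF assms] by blast
  have "homeomorphism UNIV (ray v a \<union> ray v b) f g"
  proof (rule homeomorphismI)
    have "continuous_on ({0..} \<union> {..0}) f"
      unfolding f_def by (intro continuous_on_cases) (auto intro!: continuous_intros)
    moreover have "{0::real..} \<union> {..0} = UNIV" by auto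
    ultimately show "continuous_on UNIV f" by simp
    show "continuous_on (ray v a \<union> ray v b) g"
      unfolding g_def by (rule continuous_on_cases[OF closed_ray closed_ray])
        (auto intro!: continuous_intros dest: meet)
    show "f ` UNIV \<subseteq> ray v a \<union> ray v b"
    proof (rule image_subsetI)
      show "f s \<in> ray v a \<union> ray v b" for s
        using in_rayI[of s v a] in_rayI[of "- s" v b] by (cases "0 \<le> s") (simp_all add: f_def)
    qed
    show "g ` (ray v a \<union> ray v b) \<subseteq> UNIV" by simp
    show "g (f s) = s" for s
    proof (cases "0 \<le> s")
      case True
      then show ?thesis by (simp add: f_def g_def in_rayI)
    next
      case False
      then have "f s \<notin> ray v a" using meet[of "f s"] in_rayI[of "- s" v b] by (auto simp: f_def)
      then show ?thesis using False by (simp add: f_def g_def)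
    qed
    show "f (g x) = x" if x: "x \<in> ray v a \<union> ray v b" for x
    proof (cases "x \<in> ray v a")
      case True
      then show ?thesis unfolding ray_def f_def g_def by auto
    next
      case False
      then obtain r where "x = v + r *\<^sub>R dir b" "0 < r"
        using x center_in_ray[of v a] unfolding ray_def by (auto simp: le_less)
      then show ?thesis using False by (simp add: f_def g_def)
    qed
  qed
  then show ?thesis using homeomorphic_def homeomorphic_sym by blast
qed

lemma polygonal_arc_two_rays:
  assumes "dir a \<noteq> dir b"
  shows "polygonal_arc {ray v a, ray v b}"
proof -
  have "{e \<in> {ray v a, ray v b}. is_ray e} = {ray v a, ray v b}"
    using is_ray_ray by auto
  then have "card {e \<in> {ray v a, ray v b}. is_ray e} = 2"
    using ray_neq[OF assms] by simp
  moreover have "pairwise edges_meet_ok {ray v a, ray v b}"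
    using ray_Int_ray[OF assms] edge_vertex_ray_iff
    unfolding pairwise_def edges_meet_ok_def by (auto simp: Int_commute)
  ultimately show ?thesis
    unfolding polygonal_arc_def using ray_Un_ray_homeomorphic_line[OF assms] is_ray_ray by auto
qed

lemma polygon_sector:
  assumes "a < b" "b < a + 2*pi"
  shows "polygon (sector v a b) {{ray v a, ray v b}}"
  unfolding polygon_def
  using closed_sector[of v a b] interior_sector[OF assms, of v] open_sector_nonempty[OF assms(1), of v]
    connected_open_sector[of v a b] frontier_sector[OF assms, of v]
    polygonal_arc_two_rays[OF dir_neq[OF assms], of v]
  by auto

section \<open>Fans\<close>

text \<open>The rays at the angles \<open>\<theta> 0, \<dots>, \<theta> (k - 1)\<close> cut the plane into the \<open>k\<close> sectors
  \<open>sector v (\<theta> i) (\<theta> (Suc i))\<close>; the last one closes the turn.\<close>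
definition fan :: "nat \<Rightarrow> (nat \<Rightarrow> real) \<Rightarrow> bool" where
  "fan k \<theta> \<longleftrightarrow> (\<forall>i<k. \<theta> i < \<theta> (Suc i)) \<and> \<theta> k = \<theta> 0 + 2*pi"

lemma fan_less:
  assumes "fan k \<theta>" "i < j" "j \<le> k"
  shows "\<theta> i < \<theta> j"
  using assms(2,3)
proof (induction j)
  case (Suc j)
  then show ?case using assms(1) unfolding fan_def by (cases "i = j") (auto intro: less_trans)
qed simp

lemma fan_le: "fan k \<theta> \<Longrightarrow> i \<le> j \<Longrightarrow> j \<le> k \<Longrightarrow> \<theta> i \<le> \<theta> j"
  using fan_less[of k \<theta> i j] by (cases "i = j") auto

lemma fan_nonempty: "fan k \<theta> \<Longrightarrow> 0 < k"
  using pi_gt_zero unfolding fan_def by (cases k) auto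

lemma fan_gap_less_2pi:
  assumes "fan k \<theta>" "2 \<le> k" "i < k"
  shows "\<theta> (Suc i) < \<theta> i + 2*pi"
proof (cases "i = 0")
  case True
  then show ?thesis using fan_less[OF assms(1), of 1 k] assms unfolding fan_def by simp
next
  case False
  then show ?thesis using fan_less[OF assms(1), of 0 i] fan_le[OF assms(1), of "Suc i" k] assms
    unfolding fan_def by simp
qed

lemma step_containing:
  fixes \<theta> :: "nat \<Rightarrow> real"
  assumes "\<theta> 0 \<le> t" "t < \<theta> k"
  shows "\<exists>i<k. \<theta> i \<le> t \<and> t < \<theta> (Suc i)"
  using assms(2)
proof (induction k)
  case (Suc k)
  then show ?case by (cases "t < \<theta> k") (auto intro: less_SucI)
qed (use assms(1) in simp)

lemma fan_angle:
  assumes "fan k \<theta>" "x \<noteq> v"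
  shows "\<exists>t. \<theta> 0 \<le> t \<and> t < \<theta> k
    \<and> (\<forall>i<k. x \<in> open_sector v (\<theta> i) (\<theta> (Suc i)) \<longleftrightarrow> \<theta> i < t \<and> t < \<theta> (Suc i))
    \<and> (\<forall>j<k. x \<in> ray v (\<theta> j) \<longleftrightarrow> t = \<theta> j)"
proof -
  have y: "x - v \<noteq> 0" "x = v + (x - v)" using assms(2) by simp_all
  obtain t where t: "x - v = norm (x - v) *\<^sub>R dir t" "\<theta> 0 \<le> t" "t < \<theta> 0 + 2*pi"
    using polar_form[OF y(1)] by blast
  have wrap: "\<theta> k = \<theta> 0 + 2*pi" using assms(1) unfolding fan_def by simp
  have bounds: "\<theta> 0 \<le> \<theta> i" "\<theta> i \<le> \<theta> 0 + 2*pi" if "i \<le> k" for i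
    using fan_le[OF assms(1), of 0 i] fan_le[OF assms(1), of i k] that wrap by auto
  note window = mem_open_sector_window_iff[OF y(1) t, where v = v, folded y(2)]
    mem_sector_window_iff[OF y(1) t, where v = v, folded y(2)]
  have "x \<in> open_sector v (\<theta> i) (\<theta> (Suc i)) \<longleftrightarrow> \<theta> i < t \<and> t < \<theta> (Suc i)" if "i < k" for i
    using window(1)[of "\<theta> i" "\<theta> (Suc i)"] bounds[of i] bounds[of "Suc i"] that t pi_gt_zero
    by auto
  moreover have "x \<in> ray v (\<theta> j) \<longleftrightarrow> t = \<theta> j" if "j < k" for j
    using window(2)[of "\<theta> j" "\<theta> j"] bounds[OF less_imp_le[OF that]] fan_less[OF assms(1) that]
      t wrap pi_gt_zero
    unfolding ray_eq_sector by auto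
  ultimately show ?thesis using t wrap by auto
qed

lemma fan_open_sectors_disjoint:
  assumes "fan k \<theta>" "i < k" "j < k" "i \<noteq> j"
  shows "open_sector v (\<theta> i) (\<theta> (Suc i)) \<inter> open_sector v (\<theta> j) (\<theta> (Suc j)) = {}"
proof -
  have apart: "\<theta> (Suc i) \<le> \<theta> j \<or> \<theta> (Suc j) \<le> \<theta> i"
    using fan_le[OF assms(1), of "Suc i" j] fan_le[OF assms(1), of "Suc j" i] assms(2-4) by linarith
  have "x \<notin> open_sector v (\<theta> i) (\<theta> (Suc i)) \<or> x \<notin> open_sector v (\<theta> j) (\<theta> (Suc j))" for x
  proof (cases "x = v")
    case False
    obtain t where t: "\<theta> 0 \<le> t" "t < \<theta> k"
      "\<forall>i<k. x \<in> open_sector v (\<theta> i) (\<theta> (Suc i)) \<longleftrightarrow> \<theta> i < t \<and> t < \<theta> (Suc i)"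
      "\<forall>j<k. x \<in> ray v (\<theta> j) \<longleftrightarrow> t = \<theta> j"
      using fan_angle[OF assms(1) False] by blast
    then show ?thesis using apart assms(2,3) by force
  qed (simp add: center_notin_open_sector)
  then show ?thesis by blast
qed

lemma fan_open_sector_Int_ray:
  assumes "fan k \<theta>" "i < k" "j < k"
  shows "open_sector v (\<theta> i) (\<theta> (Suc i)) \<inter> ray v (\<theta> j) = {}"
proof -
  have apart: "\<theta> j \<le> \<theta> i \<or> \<theta> (Suc i) \<le> \<theta> j"
    using fan_le[OF assms(1), of j i] fan_le[OF assms(1), of "Suc i" j] assms(2,3) by linarith
  have "x \<notin> open_sector v (\<theta> i) (\<theta> (Suc i)) \<or> x \<notin> ray v (\<theta> j)" for x
  proof (cases "x = v")
    case False
    obtain t where t: "\<theta> 0 \<le> t" "t < \<theta> k"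
      "\<forall>i<k. x \<in> open_sector v (\<theta> i) (\<theta> (Suc i)) \<longleftrightarrow> \<theta> i < t \<and> t < \<theta> (Suc i)"
      "\<forall>j<k. x \<in> ray v (\<theta> j) \<longleftrightarrow> t = \<theta> j"
      using fan_angle[OF assms(1) False] by blast
    then show ?thesis using apart assms(2,3) by force
  qed (simp add: center_notin_open_sector)
  then show ?thesis by blast
qed

lemma fan_open_sectors_cover:
  assumes "fan k \<theta>" "x \<notin> (\<Union>j<k. ray v (\<theta> j))"
  shows "\<exists>i<k. x \<in> open_sector v (\<theta> i) (\<theta> (Suc i))"
proof -
  have False: "x \<noteq> v" using assms(2) fan_nonempty[OF assms(1)] by auto
  obtain t where t: "\<theta> 0 \<le> t" "t < \<theta> k"
      "\<forall>i<k. x \<in> open_sector v (\<theta> i) (\<theta> (Suc i)) \<longleftrightarrow> \<theta> i < t \<and> t < \<theta> (Suc i)"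
      "\<forall>j<k. x \<in> ray v (\<theta> j) \<longleftrightarrow> t = \<theta> j"
      using fan_angle[OF assms(1) False] by blast
  then obtain i where "i < k" "\<theta> i \<le> t" "t < \<theta> (Suc i)" using step_containing by blast
  moreover have "t \<noteq> \<theta> i" using t(4) assms(2) \<open>i < k\<close> by blast
  ultimately show ?thesis using t(3) by force
qed

lemma fan_sectors_cover:
  assumes "fan k \<theta>"
  shows "\<exists>i<k. x \<in> sector v (\<theta> i) (\<theta> (Suc i))"
proof (cases "x \<in> (\<Union>j<k. ray v (\<theta> j))")
  case True
  then obtain j where "j < k" "x \<in> sector v (\<theta> j) (\<theta> j)" unfolding ray_eq_sector by blast
  moreover have "\<theta> j \<le> \<theta> (Suc j)" using fan_le[OF assms(1), of j "Suc j"] \<open>j < k\<close> by simp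
  ultimately show ?thesis using sector_mono[of "\<theta> j" "\<theta> j" "\<theta> j" "\<theta> (Suc j)" v] by blast
next
  case False
  then show ?thesis using fan_open_sectors_cover[OF assms(1)] open_sector_subset_sector by blast
qed

lemma closed_Int_eq_frontier_Int:
  assumes "closed A" "closed B" "interior A \<inter> B = {}" "A \<inter> interior B = {}"
  shows "A \<inter> B = frontier A \<inter> frontier B"
  using assms interior_subset by (auto simp: frontier_def closure_closed)

lemma fan_sectors_Int:
  assumes "fan k \<theta>" "2 \<le> k" "i < k" "j < k" "i \<noteq> j"
  shows "sector v (\<theta> i) (\<theta> (Suc i)) \<inter> sector v (\<theta> j) (\<theta> (Suc j))
    = frontier (sector v (\<theta> i) (\<theta> (Suc i))) \<inter> frontier (sector v (\<theta> j) (\<theta> (Suc j)))"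
proof (rule closed_Int_eq_frontier_Int[OF closed_sector closed_sector])
  have gap: "\<theta> m < \<theta> (Suc m)" "\<theta> (Suc m) < \<theta> m + 2*pi" if "m < k" for m
    using assms(1) fan_gap_less_2pi[OF assms(1,2) that] that unfolding fan_def by auto
  have "interior (sector v (\<theta> m) (\<theta> (Suc m))) \<inter> sector v (\<theta> n) (\<theta> (Suc n)) = {}"
    if "m < k" "n < k" "m \<noteq> n" for m n
  proof -
    have "open_sector v (\<theta> m) (\<theta> (Suc m)) \<inter> closure (open_sector v (\<theta> n) (\<theta> (Suc n))) = {}"
      using fan_open_sectors_disjoint[OF assms(1) that] open_open_sector[of "\<theta> m" "\<theta> (Suc m)" v]
        gap[OF that(1)] by (simp add: open_Int_closure_eq_empty)
    then show ?thesis
      using interior_sector[OF gap[OF that(1)]] closure_open_sector[OF gap(1)[OF that(2)]] by simp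
  qed
  then show "interior (sector v (\<theta> i) (\<theta> (Suc i))) \<inter> sector v (\<theta> j) (\<theta> (Suc j)) = {}"
    "sector v (\<theta> i) (\<theta> (Suc i)) \<inter> interior (sector v (\<theta> j) (\<theta> (Suc j))) = {}"
    using assms(3-5) by blast+
qed

lemma fan_open_sector_topology:
  assumes "fan k \<theta>" "i < k"
  shows "open (open_sector v (\<theta> i) (\<theta> (Suc i)))" "connected (open_sector v (\<theta> i) (\<theta> (Suc i)))"
    "open_sector v (\<theta> i) (\<theta> (Suc i)) \<noteq> {}"
    "closure (open_sector v (\<theta> i) (\<theta> (Suc i))) = sector v (\<theta> i) (\<theta> (Suc i))"
proof -
  have "\<theta> i < \<theta> (Suc i)" "\<theta> (Suc i) \<le> \<theta> i + 2*pi"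
    using assms fan_le[OF assms(1), of 0 i] fan_le[OF assms(1), of "Suc i" k] unfolding fan_def by auto
  then show "open (open_sector v (\<theta> i) (\<theta> (Suc i)))" "connected (open_sector v (\<theta> i) (\<theta> (Suc i)))"
    "open_sector v (\<theta> i) (\<theta> (Suc i)) \<noteq> {}"
    "closure (open_sector v (\<theta> i) (\<theta> (Suc i))) = sector v (\<theta> i) (\<theta> (Suc i))"
    using open_open_sector connected_open_sector open_sector_nonempty closure_open_sector by blast+
qed

text \<open>A fan of rays started at such an \<open>\<omega>\<close> has its last ray not antipodal to its first one.\<close>
lemma exists_ray_not_closing_half_turn:
  assumes rays: "\<forall>e\<in>D. \<exists>\<theta>. e = ray v \<theta>" and "3 \<le> card D"
  shows "\<exists>\<omega>. ray v \<omega> \<in> D \<and> (ray v (\<omega> + pi) \<notin> D \<or> (\<exists>t. \<omega> + pi < t \<and> t < \<omega> + 2*pi \<and> ray v t \<in> D))"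
proof (rule ccontr)
  assume contra: "\<not> ?thesis"
  have opposite: "ray v (\<omega> + pi) \<in> D" if "ray v \<omega> \<in> D" for \<omega>
    using contra that by blast
  have gap: "ray v t \<notin> D" if "ray v \<omega> \<in> D" "\<omega> + pi < t" "t < \<omega> + 2*pi" for \<omega> t
    using contra that by blast
  have "D \<noteq> {}" using \<open>3 \<le> card D\<close> by auto
  then obtain e where "e \<in> D" by blast
  then obtain \<omega> where \<omega>: "ray v \<omega> \<in> D" using rays by force
  have "D \<subseteq> {ray v \<omega>, ray v (\<omega> + pi)}"
  proof
    fix e assume "e \<in> D"
    then obtain \<theta> where "e = ray v \<theta>" using rays by blast
    then obtain s where s: "\<omega> \<le> s" "s < \<omega> + 2*pi" "e = ray v s"
      using ray_dir_representative[of \<omega> v \<theta>] by auto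
    have "\<not> (\<omega> + pi < s)" using gap[OF \<omega>, of s] s \<open>e \<in> D\<close> by auto
    moreover have "\<not> (\<omega> < s \<and> s < \<omega> + pi)"
    proof
      assume "\<omega> < s \<and> s < \<omega> + pi"
      then have "ray v (s + 2*pi) \<notin> D"
        using gap[OF opposite[OF \<omega>], of "s + 2*pi"] by auto
      then show False using s \<open>e \<in> D\<close> by simp
    qed
    ultimately have "s = \<omega> \<or> s = \<omega> + pi" using s(1) by linarith
    then show "e \<in> {ray v \<omega>, ray v (\<omega> + pi)}" using s(3) by blast
  qed
  then have "card D \<le> card {ray v \<omega>, ray v (\<omega> + pi)}" by (intro card_mono) auto
  also have "\<dots> \<le> 2" by (simp add: card_insert_le_m1)
  finally show False using \<open>3 \<le> card D\<close> by simp
qed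

lemma fan_of_angles:
  assumes "finite \<Theta>" "\<omega> \<in> \<Theta>" "\<Theta> \<subseteq> {\<omega>..<\<omega> + 2*pi}"
  shows "\<exists>\<theta>. fan (card \<Theta>) \<theta> \<and> \<theta> ` {..<card \<Theta>} = \<Theta> \<and> \<theta> 0 = \<omega>"
proof -
  obtain xs where sorted: "sorted_wrt (<) xs" and set_xs: "set xs = \<Theta>"
    using finite_set_strict_sorted[OF assms(1)] by blast
  define k where "k = card \<Theta>"
  have "distinct xs" using sorted strict_sorted_iff by blast
  then have len: "length xs = k" using distinct_card[of xs] set_xs unfolding k_def by simp
  have xs_in: "xs ! i \<in> \<Theta>" if "i < k" for i using that len set_xs nth_mem by blast
  have xs_less: "xs ! i < xs ! j" if "i < j" "j < k" for i j
    using sorted_wrt_nth_less[OF sorted that(1)] that len by simp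
  define \<theta> where "\<theta> i = (if i < k then xs ! i else \<omega> + 2*pi)" for i
  have image: "\<theta> ` {..<k} = \<Theta>"
    using set_xs len unfolding \<theta>_def by (force simp: in_set_conv_nth)
  obtain j where "j < k" "\<theta> j = \<omega>" using image assms(2) by force
  then have "\<theta> 0 \<le> \<omega>" using xs_less[of 0 j] unfolding \<theta>_def by (cases "j = 0") auto
  moreover have "\<omega> \<le> \<theta> 0" "0 < k" using xs_in[of 0] assms(3) \<open>j < k\<close> unfolding \<theta>_def by auto
  ultimately have \<theta>0: "\<theta> 0 = \<omega>" by simp
  have "fan k \<theta>"
    unfolding fan_def
  proof (intro conjI allI impI)
    show "\<theta> i < \<theta> (Suc i)" if "i < k" for i
      using xs_less[of i "Suc i"] xs_in[OF that] assms(3) that unfolding \<theta>_def by auto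
    show "\<theta> k = \<theta> 0 + 2*pi" using \<theta>0 unfolding \<theta>_def by simp
  qed
  then show ?thesis using image \<theta>0 unfolding k_def by blast
qed

lemma fan_of_rays:
  assumes fin: "finite D" and rays: "\<forall>e\<in>D. \<exists>\<theta>. e = ray v \<theta>" and "3 \<le> card D"
  shows "\<exists>\<theta>. fan (card D) \<theta> \<and> D = (\<lambda>i. ray v (\<theta> i)) ` {..<card D} \<and> \<theta> (card D - 1) - \<theta> 0 \<noteq> pi"
proof -
  obtain \<omega> where \<omega>: "ray v \<omega> \<in> D"
    and no_half_turn: "ray v (\<omega> + pi) \<notin> D \<or> (\<exists>t. \<omega> + pi < t \<and> t < \<omega> + 2*pi \<and> ray v t \<in> D)"
    using exists_ray_not_closing_half_turn[OF rays \<open>3 \<le> card D\<close>] by blast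
  define \<Theta> where "\<Theta> = {t. \<omega> \<le> t \<and> t < \<omega> + 2*pi \<and> ray v t \<in> D}"
  have inj: "inj_on (ray v) \<Theta>"
    unfolding inj_on_def \<Theta>_def using ray_eq_ray_in_window by blast
  have image: "ray v ` \<Theta> = D"
  proof
    show "ray v ` \<Theta> \<subseteq> D" unfolding \<Theta>_def by auto
    show "D \<subseteq> ray v ` \<Theta>"
    proof
      fix e assume "e \<in> D"
      then obtain \<theta> where "e = ray v \<theta>" using rays by blast
      then obtain s where "\<omega> \<le> s" "s < \<omega> + 2*pi" "e = ray v s"
        using ray_dir_representative[of \<omega> v \<theta>] by auto
      then show "e \<in> ray v ` \<Theta>" unfolding \<Theta>_def using \<open>e \<in> D\<close> by blast
    qed
  qed
  have card: "card \<Theta> = card D" using card_image[OF inj] image by simp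
  have "finite \<Theta>" using finite_imageD[of "ray v" \<Theta>] inj image fin by simp
  moreover have "\<omega> \<in> \<Theta>" "\<Theta> \<subseteq> {\<omega>..<\<omega> + 2*pi}" unfolding \<Theta>_def using \<omega> pi_gt_zero by auto
  ultimately obtain \<theta> where fan: "fan (card D) \<theta>" and angles: "\<theta> ` {..<card D} = \<Theta>" and "\<theta> 0 = \<omega>"
    using fan_of_angles card by metis
  have "\<theta> (card D - 1) - \<theta> 0 \<noteq> pi"
  proof
    assume "\<theta> (card D - 1) - \<theta> 0 = pi"
    then have last: "\<theta> (card D - 1) = \<omega> + pi" using \<open>\<theta> 0 = \<omega>\<close> by simp
    have "\<theta> (card D - 1) \<in> \<Theta>" using angles \<open>3 \<le> card D\<close> by auto
    then have "ray v (\<omega> + pi) \<in> D" unfolding last \<Theta>_def by simp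
    then obtain t where t: "\<omega> + pi < t" "t < \<omega> + 2*pi" "ray v t \<in> D" using no_half_turn by blast
    then have "t \<in> \<Theta>" unfolding \<Theta>_def using pi_gt_zero by simp
    then obtain i where "i < card D" "t = \<theta> i" using angles by force
    moreover have "i \<le> card D - 1" using \<open>i < card D\<close> by simp
    ultimately show False using fan_le[OF fan, of i "card D - 1"] last t(1) by simp
  qed
  moreover have "D = ray v ` \<theta> ` {..<card D}" using image angles by simp
  ultimately show ?thesis using fan unfolding image_image by blast
qed

section \<open>Functions linear on the sectors of a fan\<close>

definition CPA_v_function :: "nat \<Rightarrow> pt \<Rightarrow> (pt \<Rightarrow> real) \<Rightarrow> bool" where
  "CPA_v_function p v f \<longleftrightarrow> (\<exists>\<Q>. CPA_pieces f \<Q> \<and> card \<Q> = p \<and> v_function v \<Q>)"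

lemma piece_vertices_two_rays: "piece_vertices (S, {{ray v a, ray v b}}) = {v}"
  unfolding piece_vertices_def piece_edges_def edges_vertices_def using edge_vertex_ray_iff by auto

lemma CPA_v_function_fan:
  assumes fan: "fan k \<theta>" and "2 \<le> k"
    and affine: "\<And>i x. i < k \<Longrightarrow> x \<in> sector v (\<theta> i) (\<theta> (Suc i)) \<Longrightarrow> g x = c + b i \<bullet> (x - v)"
  shows "CPA_v_function k v g"
proof -
  define S where "S i = sector v (\<theta> i) (\<theta> (Suc i))" for i
  define A where "A i = (S i, {{ray v (\<theta> i), ray v (\<theta> (Suc i))}})" for i
  define \<Q> where "\<Q> = A ` {..<k}"
  have gap: "\<theta> i < \<theta> (Suc i)" "\<theta> (Suc i) < \<theta> i + 2*pi" if "i < k" for i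
    using fan fan_gap_less_2pi[OF fan \<open>2 \<le> k\<close> that] that unfolding fan_def by auto
  have "inj_on A {..<k}"
  proof (rule inj_onI)
    fix i j assume ij: "i \<in> {..<k}" "j \<in> {..<k}" "A i = A j"
    then have "open_sector v (\<theta> i) (\<theta> (Suc i)) = open_sector v (\<theta> j) (\<theta> (Suc j))"
      using interior_sector[OF gap] unfolding A_def S_def by (metis lessThan_iff prod.inject)
    then show "i = j"
      using fan_open_sectors_disjoint[OF fan] open_sector_nonempty[OF gap(1)] ij(1,2)
      by (metis disjoint_iff lessThan_iff)
  qed
  then have card: "card \<Q> = k" unfolding \<Q>_def by (simp add: card_image)
  have vertices: "piece_vertices (A i) = {v}" for i
    unfolding A_def by (rule piece_vertices_two_rays)
  have cover: "(\<Union>i<k. S i) = UNIV"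
    using fan_sectors_cover[OF fan] unfolding S_def by blast
  have "continuous_on (\<Union>i<k. S i) g"
  proof (rule continuous_on_closed_Union)
    show "continuous_on (S i) g" if "i \<in> {..<k}" for i
    proof (rule continuous_on_eq)
      show "continuous_on (S i) (\<lambda>x. c + b i \<bullet> (x - v))" by (intro continuous_intros)
      show "c + b i \<bullet> (x - v) = g x" if "x \<in> S i" for x
        using affine \<open>i \<in> {..<k}\<close> that unfolding S_def by simp
    qed
  qed (auto simp: S_def closed_sector)
  then have "continuous_on UNIV g" using cover by simp
  moreover have "\<exists>a d. \<forall>x\<in>S i. g x = a \<bullet> x + d" if "i < k" for i
    using affine[OF that] unfolding S_def
    by (intro exI[of _ "b i"] exI[of _ "c - b i \<bullet> v"]) (simp add: inner_diff_right)
  moreover have "S i \<inter> S j = frontier (S i) \<inter> frontier (S j)" if "i < k" "j < k" "A i \<noteq> A j" for i j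
    using fan_sectors_Int[OF fan \<open>2 \<le> k\<close> that(1,2)] that(3) unfolding S_def by blast
  ultimately have "CPA_pieces g \<Q>"
    unfolding CPA_pieces_def \<Q>_def using polygon_sector[OF gap] cover vertices
    by (auto simp: A_def S_def)
  moreover have "v_function v \<Q>"
    unfolding v_function_def \<Q>_def using vertices fan_nonempty[OF fan]
    by (auto simp: A_def piece_edges_def is_ray_ray)
  ultimately show ?thesis unfolding CPA_v_function_def using card by blast
qed

lemma inner_eq_on_ray:
  assumes "x \<in> ray v t" "(a - b) \<bullet> dir t = 0"
  shows "a \<bullet> (x - v) = b \<bullet> (x - v)"
  using assms unfolding ray_def by (auto simp: inner_diff_left)

lemma ray_Un_Int_subset:
  assumes "dir a \<noteq> dir c"
  shows "(ray v a \<union> ray v b) \<inter> (ray v b \<union> ray v c) \<subseteq> ray v b"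
proof
  fix x assume "x \<in> (ray v a \<union> ray v b) \<inter> (ray v b \<union> ray v c)"
  then have "x \<in> ray v b \<or> x \<in> ray v a \<inter> ray v c" by blast
  then show "x \<in> ray v b" using ray_Int_ray[OF assms, of v] by auto
qed

text \<open>Everything outside the first two sectors is the third sector \<open>sector v \<gamma> (\<alpha> + 2*pi)\<close>.\<close>
definition fan3_affine :: "pt \<Rightarrow> real \<Rightarrow> real \<Rightarrow> real \<Rightarrow> real \<Rightarrow> pt \<Rightarrow> pt \<Rightarrow> pt \<Rightarrow> pt \<Rightarrow> real" where
  "fan3_affine v \<alpha> \<beta> \<gamma> c b\<^sub>1 b\<^sub>2 b\<^sub>3 x =
     c + (if x \<in> sector v \<alpha> \<beta> then b\<^sub>1 else if x \<in> sector v \<beta> \<gamma> then b\<^sub>2 else b\<^sub>3) \<bullet> (x - v)"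

lemma fan3_affine:
  fixes v :: pt and c :: real
  assumes angles: "\<alpha> < \<beta>" "\<beta> < \<gamma>" "\<gamma> < \<alpha> + 2*pi"
    and glue: "(b\<^sub>1 - b\<^sub>2) \<bullet> dir \<beta> = 0" "(b\<^sub>2 - b\<^sub>3) \<bullet> dir \<gamma> = 0" "(b\<^sub>3 - b\<^sub>1) \<bullet> dir \<alpha> = 0"
  defines "g \<equiv> fan3_affine v \<alpha> \<beta> \<gamma> c b\<^sub>1 b\<^sub>2 b\<^sub>3"
  shows "x \<in> sector v \<alpha> \<beta> \<Longrightarrow> g x = c + b\<^sub>1 \<bullet> (x - v)"
    and "x \<in> sector v \<beta> \<gamma> \<Longrightarrow> g x = c + b\<^sub>2 \<bullet> (x - v)"
    and "x \<in> sector v \<gamma> (\<alpha> + 2*pi) \<Longrightarrow> g x = c + b\<^sub>3 \<bullet> (x - v)"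
    and "CPA_v_function 3 v g"
proof -
  define \<theta> where "\<theta> i = (if i = 0 then \<alpha> else if i = 1 then \<beta> else if i = 2 then \<gamma> else \<alpha> + 2*pi)" for i :: nat
  define b where "b i = (if i = 0 then b\<^sub>1 else if i = 1 then b\<^sub>2 else b\<^sub>3)" for i :: nat
  have less_3: "i < 3 \<longleftrightarrow> i = 0 \<or> i = 1 \<or> i = (2::nat)" for i by auto
  have fan: "fan 3 \<theta>" unfolding fan_def \<theta>_def less_3 using angles by auto
  have dirs: "dir \<alpha> \<noteq> dir \<gamma>" "dir \<beta> \<noteq> dir (\<alpha> + 2*pi)" "dir \<gamma> \<noteq> dir \<beta>"
    using dir_neq[of \<alpha> \<gamma>] dir_neq[of \<beta> "\<alpha> + 2*pi"] dir_neq[of \<beta> \<gamma>] angles by auto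
  have frontier: "frontier (sector v (\<theta> i) (\<theta> (Suc i))) = ray v (\<theta> i) \<union> ray v (\<theta> (Suc i))" if "i < 3" for i
    using frontier_sector[of "\<theta> i" "\<theta> (Suc i)" v] fan fan_gap_less_2pi[OF fan _ that] that
    unfolding fan_def by auto
  have "sector v \<alpha> \<beta> \<inter> sector v \<beta> \<gamma> \<subseteq> ray v \<beta>"
    using fan_sectors_Int[OF fan _, of 0 1] frontier[of 0] frontier[of 1] ray_Un_Int_subset[OF dirs(1)]
    by (simp add: \<theta>_def)
  moreover have "sector v \<beta> \<gamma> \<inter> sector v \<gamma> (\<alpha> + 2*pi) \<subseteq> ray v \<gamma>"
    using fan_sectors_Int[OF fan _, of 1 2] frontier[of 1] frontier[of 2] ray_Un_Int_subset[OF dirs(2)]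
    by (simp add: \<theta>_def numeral_2_eq_2)
  moreover have "sector v \<gamma> (\<alpha> + 2*pi) \<inter> sector v \<alpha> \<beta> \<subseteq> ray v \<alpha>"
    using fan_sectors_Int[OF fan _, of 2 0] frontier[of 2] frontier[of 0] ray_Un_Int_subset[OF dirs(3)]
    by (simp add: \<theta>_def numeral_2_eq_2 ray_def)
  ultimately show sec1: "x \<in> sector v \<alpha> \<beta> \<Longrightarrow> g x = c + b\<^sub>1 \<bullet> (x - v)"
    and sec2: "x \<in> sector v \<beta> \<gamma> \<Longrightarrow> g x = c + b\<^sub>2 \<bullet> (x - v)"
    and sec3: "x \<in> sector v \<gamma> (\<alpha> + 2*pi) \<Longrightarrow> g x = c + b\<^sub>3 \<bullet> (x - v)" for x
    using inner_eq_on_ray[OF _ glue(1)] inner_eq_on_ray[OF _ glue(2)] inner_eq_on_ray[OF _ glue(3)]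
    unfolding g_def fan3_affine_def by auto
  have "g x = c + b i \<bullet> (x - v)" if "i < 3" "x \<in> sector v (\<theta> i) (\<theta> (Suc i))" for i x
    using that sec1 sec2 sec3 unfolding less_3 by (auto simp: \<theta>_def b_def)
  then show "CPA_v_function 3 v g"
    using CPA_v_function_fan[OF fan, of v g c b] by simp
qed

lemma sin_nonzero_in_0_2pi:
  assumes "0 < x" "x < 2*pi" "x \<noteq> pi"
  shows "sin x \<noteq> 0"
proof
  assume "sin x = 0"
  then obtain i :: int where i: "x = of_int i * pi" using sin_zero_iff_int2 by blast
  then have "0 < i" "i < 2"
    using assms pi_gt_zero by (simp_all add: zero_less_mult_iff mult_less_cancel_right)
  then have "i = 1" by linarith
  then show False using i assms(3) by simp
qed

lemma inner_dir_quarter_turn: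
  "dir (s + pi/2) \<bullet> dir s = 0" "dir (s + pi/2) \<bullet> dir t = sin (t - s)"
  using sin_cos_eq[of "t - s"] by (simp_all add: inner_dir algebra_simps)

lemma eq_0_if_orthogonal_to_two_dirs:
  assumes "z \<bullet> dir s = 0" "z \<bullet> dir t = 0" "sin (t - s) \<noteq> 0"
  shows "z = 0"
proof -
  have "z$1 * sin (t - s) = sin t * (z \<bullet> dir s) - sin s * (z \<bullet> dir t)"
    "z$2 * sin (t - s) = cos s * (z \<bullet> dir t) - cos t * (z \<bullet> dir s)"
    by (simp_all add: inner_real2 sin_diff algebra_simps)
  then show ?thesis using assms by (simp add: real2_eq_iff)
qed

lemma fan_gradients_agree_on_rays:
  assumes fan: "fan k \<theta>"
    and affine: "\<And>i x. i < k \<Longrightarrow> x \<in> sector v (\<theta> i) (\<theta> (Suc i)) \<Longrightarrow> f x = c + a i \<bullet> (x - v)"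
  shows "Suc i < k \<Longrightarrow> a (Suc i) \<bullet> dir (\<theta> (Suc i)) = a i \<bullet> dir (\<theta> (Suc i))"
    and "a (k - 1) \<bullet> dir (\<theta> 0) = a 0 \<bullet> dir (\<theta> 0)"
proof -
  have le: "\<theta> i \<le> \<theta> (Suc i)" if "i < k" for i using fan_le[OF fan, of i "Suc i"] that by simp
  show "a (Suc i) \<bullet> dir (\<theta> (Suc i)) = a i \<bullet> dir (\<theta> (Suc i))" if "Suc i < k"
    using affine[of i "v + dir (\<theta> (Suc i))"] affine[of "Suc i" "v + dir (\<theta> (Suc i))"]
      dir_in_sector le[of i] le[of "Suc i"] that by simp
  have "0 < k" using fan_nonempty[OF fan] .
  then have "v + dir (\<theta> 0) \<in> sector v (\<theta> (k - 1)) (\<theta> (Suc (k - 1)))"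
    using dir_in_sector[of "\<theta> (k - 1)" "\<theta> k"] le[of "k - 1"] fan unfolding fan_def by simp
  then show "a (k - 1) \<bullet> dir (\<theta> 0) = a 0 \<bullet> dir (\<theta> 0)"
    using affine[of "k - 1" "v + dir (\<theta> 0)"] affine[of 0 "v + dir (\<theta> 0)"]
      dir_in_sector le[of 0] \<open>0 < k\<close> by simp
qed

lemma fan_inner_angles:
  assumes "fan (Suc l) \<theta>" "n \<in> {1..l-1}"
  shows "\<theta> 0 < \<theta> n" "\<theta> n < \<theta> l" "\<theta> l < \<theta> 0 + 2*pi"
  using fan_less[OF assms(1), of 0 n] fan_less[OF assms(1), of n l] fan_less[OF assms(1), of l "Suc l"]
    assms unfolding fan_def by auto

lemma fan3_affine_on_fan_sector:
  assumes fan: "fan (Suc l) \<theta>" and n: "n \<in> {1..l-1}"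
    and j: "j \<le> l" "x \<in> sector v (\<theta> j) (\<theta> (Suc j))"
    and glue: "(b\<^sub>1 - b\<^sub>2) \<bullet> dir (\<theta> n) = 0" "(b\<^sub>2 - b\<^sub>3) \<bullet> dir (\<theta> l) = 0" "(b\<^sub>3 - b\<^sub>1) \<bullet> dir (\<theta> 0) = 0"
  shows "fan3_affine v (\<theta> 0) (\<theta> n) (\<theta> l) c b\<^sub>1 b\<^sub>2 b\<^sub>3 x
    = c + (if j = l then b\<^sub>3 else if n \<le> j then b\<^sub>2 else b\<^sub>1) \<bullet> (x - v)"
proof -
  note F = fan3_affine[OF fan_inner_angles[OF fan n] glue, where v = v and c = c]
  consider "j = l" | "n \<le> j" "j < l" | "j < n" using j(1) by linarith
  then show ?thesis
  proof cases
    case 1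
    then show ?thesis using F(3) j fan unfolding fan_def by simp
  next
    case 2
    then have "sector v (\<theta> j) (\<theta> (Suc j)) \<subseteq> sector v (\<theta> n) (\<theta> l)"
      using fan_le[OF fan] by (intro sector_mono) auto
    then show ?thesis using F(2) j 2 by auto
  next
    case 3
    then have "sector v (\<theta> j) (\<theta> (Suc j)) \<subseteq> sector v (\<theta> 0) (\<theta> n)"
      using fan_le[OF fan] n by (intro sector_mono) auto
    then show ?thesis using F(1) j 3 n by auto
  qed
qed

lemma sum_corrections_eq:
  fixes a m :: "nat \<Rightarrow> real^2"
  assumes "sin (t - s) \<noteq> 0" "1 \<le> l"
    and "(a l - a 0) \<bullet> dir s = 0" "(a l - a (l - 1)) \<bullet> dir t = 0"
    and "\<And>n. m n \<bullet> dir s = 0" "\<And>n. m n \<bullet> dir t = (a n - a (n - 1)) \<bullet> dir t"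
  shows "(\<Sum>n=1..l-1. m n) = a l - a 0"
proof -
  have "(\<Sum>n=1..l-1. m n) \<bullet> dir t = (\<Sum>n=1..l-1. a n - a (n - 1)) \<bullet> dir t"
    using assms(6) by (simp add: inner_sum_left)
  also have "(\<Sum>n=1..l-1. a n - a (n - 1)) = a (l - 1) - a 0"
    using sum_telescope''[of 0 "l - 1" a] by simp
  finally have "(a l - a 0 - (\<Sum>n=1..l-1. m n)) \<bullet> dir t = 0"
    using assms(4) by (simp add: inner_diff_left)
  moreover have "(a l - a 0 - (\<Sum>n=1..l-1. m n)) \<bullet> dir s = 0"
    using assms(3,5) by (simp add: inner_diff_left inner_sum_left)
  ultimately have "a l - a 0 - (\<Sum>n=1..l-1. m n) = 0"
    using assms(1) by (intro eq_0_if_orthogonal_to_two_dirs)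
  then show ?thesis by simp
qed

lemma sum_gradient_jumps:
  fixes a m :: "nat \<Rightarrow> real^2"
  assumes "j \<le> l" "(\<Sum>n=1..l-1. m n) = a l - a 0"
  shows "(\<Sum>n=1..l-1. if j = l then m n else if n \<le> j then a n - a (n - 1) else 0) = a j - a 0"
proof (cases "j = l")
  case False
  then have "(\<Sum>n=1..l-1. if j = l then m n else if n \<le> j then a n - a (n - 1) else 0)
      = (\<Sum>n=1..j. a n - a (n - 1))"
    using assms(1) by (intro sum.mono_neutral_cong_right) auto
  then show ?thesis using sum_telescope''[of 0 j a] by simp
qed (use assms(2) in simp)

lemma fan_decomposition:
  assumes fan: "fan (Suc l) \<theta>" and "2 \<le> l" and not_antipodal: "\<theta> l - \<theta> 0 \<noteq> pi"
    and affine: "\<And>i x. i \<le> l \<Longrightarrow> x \<in> sector v (\<theta> i) (\<theta> (Suc i)) \<Longrightarrow> f x = c + a i \<bullet> (x - v)"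
  shows "\<exists>F. (\<forall>n\<in>{1..l-1}. CPA_v_function 3 v (F n)) \<and> f = (\<lambda>x. \<Sum>n=1..l-1. F n x)"
proof -
  note affine' = affine[unfolded less_Suc_eq_le[symmetric]]
  define d where "d n = a n - a (n - 1)" for n
  have jump: "d n \<bullet> dir (\<theta> n) = 0" if "1 \<le> n" "n \<le> l" for n
    using fan_gradients_agree_on_rays(1)[OF fan affine', where i = "n - 1"] that
    by (simp add: d_def inner_diff_left)
  have wrap: "(a l - a 0) \<bullet> dir (\<theta> 0) = 0"
    using fan_gradients_agree_on_rays(2)[OF fan affine'] by (simp add: inner_diff_left)
  have one: "1 \<in> {1..l-1}" using \<open>2 \<le> l\<close> by simp
  then have sin: "sin (\<theta> l - \<theta> 0) \<noteq> 0"
    using fan_inner_angles[OF fan] not_antipodal by (intro sin_nonzero_in_0_2pi) force+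
  define m where "m n = (d n \<bullet> dir (\<theta> l) / sin (\<theta> l - \<theta> 0)) *\<^sub>R dir (\<theta> 0 + pi/2)" for n
  have m0: "m n \<bullet> dir (\<theta> 0) = 0" and ml: "m n \<bullet> dir (\<theta> l) = d n \<bullet> dir (\<theta> l)" for n
    using sin by (simp_all add: m_def inner_dir_quarter_turn)
  have sum_m: "(\<Sum>n=1..l-1. m n) = a l - a 0"
    using sum_corrections_eq[OF sin _ wrap, of m] jump[of l] m0 ml \<open>2 \<le> l\<close> by (simp add: d_def)
  define a' where "a' n = (if n = 1 then a 0 else 0)" for n :: nat
  define c' where "c' n = (if n = 1 then c else 0)" for n :: nat
  define F where "F n = fan3_affine v (\<theta> 0) (\<theta> n) (\<theta> l) (c' n) (a' n) (a' n + d n) (a' n + m n)" for n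
  have glue: "(a' n - (a' n + d n)) \<bullet> dir (\<theta> n) = 0" "((a' n + d n) - (a' n + m n)) \<bullet> dir (\<theta> l) = 0"
    "((a' n + m n) - a' n) \<bullet> dir (\<theta> 0) = 0" if "n \<in> {1..l-1}" for n
    using jump[of n] that ml[of n] m0[of n] by (auto simp: inner_diff_left)
  have "f x = (\<Sum>n=1..l-1. F n x)" for x
  proof -
    obtain j where j: "j \<le> l" "x \<in> sector v (\<theta> j) (\<theta> (Suc j))"
      using fan_sectors_cover[OF fan] less_Suc_eq_le by blast
    define e where "e n = (if j = l then m n else if n \<le> j then d n else 0)" for n
    have "F n x = c' n + (a' n + e n) \<bullet> (x - v)" if "n \<in> {1..l-1}" for n
      using fan3_affine_on_fan_sector[OF fan that j glue[OF that], of "c' n"]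
      unfolding F_def e_def by auto
    then have "(\<Sum>n=1..l-1. F n x) = (\<Sum>n=1..l-1. c' n + (a' n + e n) \<bullet> (x - v))"
      by (intro sum.cong) auto
    also have "\<dots> = (\<Sum>n=1..l-1. c' n) + ((\<Sum>n=1..l-1. a' n) + (\<Sum>n=1..l-1. e n)) \<bullet> (x - v)"
      by (simp add: sum.distrib inner_sum_left inner_add_left)
    also have "(\<Sum>n=1..l-1. e n) = a j - a 0"
      unfolding e_def d_def by (rule sum_gradient_jumps[OF j(1) sum_m])
    finally show ?thesis
      using affine[OF j] one by (simp add: a'_def c'_def)
  qed
  moreover have "CPA_v_function 3 v (F n)" if "n \<in> {1..l-1}" for n
    using fan3_affine(4)[OF fan_inner_angles[OF fan that] glue[OF that]] unfolding F_def by simp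
  ultimately show ?thesis by blast
qed

section \<open>The pieces of a CPA v-function\<close>

lemma v_function_edge_eq_ray:
  assumes "v_function v \<P>" "A \<in> \<P>" "e \<in> piece_edges A"
  shows "\<exists>\<theta>. e = ray v \<theta>"
proof -
  obtain w u where "u \<noteq> 0" and e: "e = {w + t *\<^sub>R u | t. 0 \<le> t}"
    using assms unfolding v_function_def is_ray_def by blast
  then have "edge_vertex w e" unfolding edge_vertex_def by blast
  then have "w = v"
    using assms unfolding v_function_def piece_vertices_def edges_vertices_def by blast
  obtain \<theta> where "u = norm u *\<^sub>R dir \<theta>" using polar_form[OF \<open>u \<noteq> 0\<close>] by blast
  then show ?thesis using half_line_eq_ray[OF \<open>u \<noteq> 0\<close>] e \<open>w = v\<close> by blast
qed

lemma finite_piece_edges: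
  assumes "polygon (fst A) (snd A)"
  shows "finite (piece_edges A)"
  unfolding piece_edges_def
proof (rule finite_Union)
  show "finite (snd A)" using assms unfolding polygon_def by simp
  show "finite C" if "C \<in> snd A" for C
    using assms that unfolding polygon_def polygonal_arc_def polygonal_cycle_def by auto
qed

lemma frontier_piece: "polygon (fst A) (snd A) \<Longrightarrow> frontier (fst A) = \<Union>(piece_edges A)"
  unfolding polygon_def piece_edges_def by simp

lemma CPA_piecesD:
  assumes "CPA_pieces f \<P>"
  shows "finite \<P>" "\<Union>(fst ` \<P>) = UNIV"
    and "A \<in> \<P> \<Longrightarrow> polygon (fst A) (snd A)"
    and "A \<in> \<P> \<Longrightarrow> \<exists>a c. \<forall>x\<in>fst A. f x = a \<bullet> x + c"
    and "A \<in> \<P> \<Longrightarrow> B \<in> \<P> \<Longrightarrow> A \<noteq> B \<Longrightarrow> fst A \<inter> fst B = frontier (fst A) \<inter> frontier (fst B)"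
  using assms unfolding CPA_pieces_def by simp_all

lemma CPA_pieces_interior_Int_edges:
  assumes "CPA_pieces f \<P>" "A \<in> \<P>" "B \<in> \<P>"
  shows "interior (fst A) \<inter> \<Union>(piece_edges B) = {}"
proof -
  have polygons: "polygon (fst A) (snd A)" "polygon (fst B) (snd B)"
    using CPA_piecesD(3)[OF assms(1)] assms(2,3) by auto
  have meet: "fst A \<inter> fst B = frontier (fst A) \<inter> frontier (fst B)" if "A \<noteq> B"
    using CPA_piecesD(5)[OF assms(1)] assms(2,3) that by blast
  have "x \<notin> \<Union>(piece_edges B)" if x: "x \<in> interior (fst A)" for x
  proof
    assume "x \<in> \<Union>(piece_edges B)"
    then have "x \<in> frontier (fst B)" using frontier_piece[OF polygons(2)] by simp
    moreover have "x \<notin> frontier (fst A)" using x by (simp add: frontier_def)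
    moreover have "x \<in> fst A" using x interior_subset by blast
    moreover have "closed (fst B)" using polygons(2) unfolding polygon_def by simp
    ultimately show False
      using meet frontier_subset_closed by (cases "A = B") auto
  qed
  then show ?thesis by blast
qed

lemma connected_subset_member:
  assumes "\<Union>\<S> = UNIV" "\<And>S. S \<in> \<S> \<Longrightarrow> frontier S \<subseteq> U"
    and "connected C" "C \<noteq> {}" "C \<inter> U = {}"
  shows "\<exists>S\<in>\<S>. C \<subseteq> S"
proof -
  obtain x S where "x \<in> C" "S \<in> \<S>" "x \<in> S" using assms(1,4) by blast
  moreover have "C \<subseteq> S"
  proof (rule ccontr)
    assume "\<not> C \<subseteq> S"
    then have "C \<inter> frontier S \<noteq> {}"
      using connected_Int_frontier[OF assms(3)] \<open>x \<in> C\<close> \<open>x \<in> S\<close> by blast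
    then show False using assms(2,5) \<open>S \<in> \<S>\<close> by blast
  qed
  ultimately show ?thesis by blast
qed

lemma fan_length_le_card:
  assumes "finite \<S>" "\<Union>\<S> = UNIV" and conn: "\<And>S. S \<in> \<S> \<Longrightarrow> connected (interior S)"
    and fr: "\<And>S. S \<in> \<S> \<Longrightarrow> frontier S \<subseteq> U" and int: "\<And>S. S \<in> \<S> \<Longrightarrow> interior S \<inter> U = {}"
    and fan: "fan k \<theta>" and U: "U = (\<Union>j<k. ray v (\<theta> j))"
  shows "k \<le> card \<S>"
proof -
  define W where "W i = open_sector v (\<theta> i) (\<theta> (Suc i))" for i
  note W = fan_open_sector_topology[OF fan, of _ v, folded W_def]
  have "W i \<inter> U = {}" if "i < k" for i
    using fan_open_sector_Int_ray[OF fan that] unfolding W_def U by blast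
  then have "\<exists>S\<in>\<S>. W i \<subseteq> interior S" if "i < k" for i
    using connected_subset_member[OF assms(2) fr W(2,3)[OF that]] that W(1) interior_maximal by metis
  then obtain g where g: "\<And>i. i < k \<Longrightarrow> g i \<in> \<S> \<and> W i \<subseteq> interior (g i)"
    by metis
  have "inj_on g {..<k}"
  proof (rule inj_onI, rule ccontr)
    fix i j assume ij: "i \<in> {..<k}" "j \<in> {..<k}" "g i = g j" "i \<noteq> j"
    define I where "I = interior (g i)"
    define V where "V = (\<Union>m\<in>{..<k} - {i}. W m)"
    have "I \<subseteq> W i \<union> V"
    proof
      fix x assume "x \<in> I"
      then have "x \<notin> U" using int g ij(1) unfolding I_def by blast
      then obtain m where "m < k" "x \<in> W m"
        using fan_open_sectors_cover[OF fan] unfolding W_def U by blast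
      then show "x \<in> W i \<union> V" unfolding V_def by (cases "m = i") auto
    qed
    moreover have "W i \<inter> V = {}"
      using fan_open_sectors_disjoint[OF fan] ij(1) unfolding V_def W_def by blast
    moreover have "open V" unfolding V_def using W(1) by blast
    moreover have "connected I" unfolding I_def using conn g ij(1) by blast
    ultimately have "W i \<inter> I = {} \<or> V \<inter> I = {}"
      using connectedD[of I "W i" V] W(1) ij(1) by blast
    moreover have "W i \<subseteq> I" "W j \<subseteq> I" "W j \<subseteq> V"
      using g[of i] g[of j] ij unfolding I_def V_def by auto
    ultimately show False using W(3) ij(1,2) by blast
  qed
  then have "card {..<k} \<le> card \<S>"
    using g assms(1) by (intro card_inj_on_le) auto
  then show ?thesis by simp
qed

definition pieces_edges :: "piece set \<Rightarrow> pt set set" where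
  "pieces_edges \<P> = (\<Union>A\<in>\<P>. piece_edges A)"

lemma CPA_pieces_frontier_subset:
  assumes "CPA_pieces f \<P>" "A \<in> \<P>"
  shows "frontier (fst A) \<subseteq> \<Union>(pieces_edges \<P>)"
  using frontier_piece[OF CPA_piecesD(3)[OF assms]] assms(2) unfolding pieces_edges_def by blast

lemma v_function_pieces_edges:
  assumes "CPA_pieces f \<P>" "v_function v \<P>"
  shows "finite (pieces_edges \<P>)" "\<forall>e\<in>pieces_edges \<P>. \<exists>\<theta>. e = ray v \<theta>"
  using finite_piece_edges[OF CPA_piecesD(3)[OF assms(1)]] CPA_piecesD(1)[OF assms(1)]
    v_function_edge_eq_ray[OF assms(2)]
  unfolding pieces_edges_def by auto

lemma card_pieces_edges_le:
  assumes cpa: "CPA_pieces f \<P>" and vf: "v_function v \<P>" and "3 \<le> card (pieces_edges \<P>)"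
  shows "card (pieces_edges \<P>) \<le> card \<P>"
proof -
  note R = v_function_pieces_edges[OF cpa vf]
  obtain \<theta> where fan: "fan (card (pieces_edges \<P>)) \<theta>"
    and rays: "pieces_edges \<P> = (\<lambda>i. ray v (\<theta> i)) ` {..<card (pieces_edges \<P>)}"
    using fan_of_rays[OF R \<open>3 \<le> card (pieces_edges \<P>)\<close>] by blast
  have "card (pieces_edges \<P>) \<le> card (fst ` \<P>)"
  proof (rule fan_length_le_card[OF _ _ _ _ _ fan])
    show "finite (fst ` \<P>)" "\<Union>(fst ` \<P>) = UNIV" using CPA_piecesD(1,2)[OF cpa] by auto
    show "connected (interior S)" if "S \<in> fst ` \<P>" for S
      using CPA_piecesD(3)[OF cpa] that unfolding polygon_def by auto
    show "frontier S \<subseteq> \<Union>(pieces_edges \<P>)" if "S \<in> fst ` \<P>" for S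
      using CPA_pieces_frontier_subset[OF cpa] that by blast
    show "interior S \<inter> \<Union>(pieces_edges \<P>) = {}" if "S \<in> fst ` \<P>" for S
      using CPA_pieces_interior_Int_edges[OF cpa] that unfolding pieces_edges_def by blast
    show "\<Union>(pieces_edges \<P>) = (\<Union>j<card (pieces_edges \<P>). ray v (\<theta> j))"
      by (subst rays) blast
  qed
  also have "\<dots> \<le> card \<P>" using CPA_piecesD(1)[OF cpa] by (rule card_image_le)
  finally show ?thesis .
qed

lemma CPA_pieces_affine_on_fan_sectors:
  assumes cpa: "CPA_pieces f \<P>" and fan: "fan k \<theta>"
    and edges: "\<Union>(pieces_edges \<P>) \<subseteq> (\<Union>j<k. ray v (\<theta> j))"
  shows "\<exists>a. \<forall>i<k. \<forall>x\<in>sector v (\<theta> i) (\<theta> (Suc i)). f x = f v + a i \<bullet> (x - v)"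
proof -
  have "\<exists>b. \<forall>x\<in>sector v (\<theta> i) (\<theta> (Suc i)). f x = f v + b \<bullet> (x - v)" if "i \<in> {..<k}" for i
  proof -
    note W = fan_open_sector_topology[OF fan, of i v]
    have "\<exists>S\<in>fst ` \<P>. open_sector v (\<theta> i) (\<theta> (Suc i)) \<subseteq> S"
    proof (rule connected_subset_member)
      show "\<Union>(fst ` \<P>) = UNIV" using CPA_piecesD(2)[OF cpa] .
      show "frontier S \<subseteq> (\<Union>j<k. ray v (\<theta> j))" if "S \<in> fst ` \<P>" for S
        using CPA_pieces_frontier_subset[OF cpa] edges that by blast
      show "open_sector v (\<theta> i) (\<theta> (Suc i)) \<inter> (\<Union>j<k. ray v (\<theta> j)) = {}"
        using fan_open_sector_Int_ray[OF fan] \<open>i \<in> {..<k}\<close> by blast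
    qed (use W \<open>i \<in> {..<k}\<close> in auto)
    then obtain A where A: "A \<in> \<P>" "open_sector v (\<theta> i) (\<theta> (Suc i)) \<subseteq> fst A" by blast
    have "closed (fst A)" using CPA_piecesD(3)[OF cpa A(1)] unfolding polygon_def by blast
    then have sub: "sector v (\<theta> i) (\<theta> (Suc i)) \<subseteq> fst A"
      using closure_minimal[OF A(2)] W(4) \<open>i \<in> {..<k}\<close> by simp
    have "v \<in> sector v (\<theta> i) (\<theta> (Suc i))"
      using fan_le[OF fan, of i "Suc i"] \<open>i \<in> {..<k}\<close> by (intro center_in_sector) simp
    moreover obtain a c where "\<forall>x\<in>fst A. f x = a \<bullet> x + c"
      using CPA_piecesD(4)[OF cpa A(1)] by blast
    ultimately have fv: "f v = a \<bullet> v + c" and fx: "\<And>x. x \<in> sector v (\<theta> i) (\<theta> (Suc i)) \<Longrightarrow> f x = a \<bullet> x + c"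
      using sub by auto
    have "f x = f v + a \<bullet> (x - v)" if "x \<in> sector v (\<theta> i) (\<theta> (Suc i))" for x
      unfolding fv fx[OF that] by (simp add: inner_diff_right)
    then show ?thesis by blast
  qed
  then have "\<forall>i\<in>{..<k}. \<exists>b. \<forall>x\<in>sector v (\<theta> i) (\<theta> (Suc i)). f x = f v + b \<bullet> (x - v)" ..
  then obtain a where "\<forall>i\<in>{..<k}. \<forall>x\<in>sector v (\<theta> i) (\<theta> (Suc i)). f x = f v + a i \<bullet> (x - v)"
    by (rule bchoice[THEN exE])
  then show ?thesis by blast
qed

lemma extend_rays_to_three:
  assumes "finite R" "\<forall>e\<in>R. \<exists>\<theta>. e = ray v \<theta>"
  shows "\<exists>D. finite D \<and> R \<subseteq> D \<and> (\<forall>e\<in>D. \<exists>\<theta>. e = ray v \<theta>) \<and> card D = max 3 (card R)"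
proof (cases "3 \<le> card R")
  case True
  then show ?thesis using assms by (intro exI[of _ R]) auto
next
  case False
  define X where "X = {ray v 0, ray v 1, ray v 2}"
  have "dir 0 \<noteq> dir 1" "dir 0 \<noteq> dir 2" "dir 1 \<noteq> dir 2"
    using dir_neq[of 0 1] dir_neq[of 0 2] dir_neq[of 1 2] pi_gt3 by auto
  then have "card X = 3" unfolding X_def using ray_neq by simp
  then have "3 - card R \<le> card (X - R)"
    using diff_card_le_card_Diff[OF assms(1), of X] by simp
  then obtain T where T: "T \<subseteq> X - R" "card T = 3 - card R" "finite T"
    by (rule obtain_subset_with_card_n)
  have "card (R \<union> T) = 3"
    using card_Un_disjoint[OF assms(1) T(3)] T(1,2) False by auto
  moreover have "\<forall>e\<in>R \<union> T. \<exists>\<theta>. e = ray v \<theta>" using assms(2) T(1) unfolding X_def by blast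
  ultimately show ?thesis using assms(1) T(3) False by (intro exI[of _ "R \<union> T"]) auto
qed

lemma v_function_linear_on_fan:
  assumes cpa: "CPA_pieces f \<P>" and vf: "v_function v \<P>" and "3 \<le> card \<P>"
  shows "\<exists>l \<theta> a. 2 \<le> l \<and> Suc l \<le> card \<P> \<and> fan (Suc l) \<theta> \<and> \<theta> l - \<theta> 0 \<noteq> pi
    \<and> (\<forall>i\<le>l. \<forall>x\<in>sector v (\<theta> i) (\<theta> (Suc i)). f x = f v + a i \<bullet> (x - v))"
proof -
  obtain D where D: "finite D" "pieces_edges \<P> \<subseteq> D" "\<forall>e\<in>D. \<exists>\<theta>. e = ray v \<theta>"
    and card_D: "card D = max 3 (card (pieces_edges \<P>))"
    using extend_rays_to_three[OF v_function_pieces_edges[OF cpa vf]] by blast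
  then have "3 \<le> card D" "card D \<le> card \<P>"
    using card_pieces_edges_le[OF cpa vf] \<open>3 \<le> card \<P>\<close> by (auto simp: max_def)
  define l where "l = card D - 1"
  have l: "card D = Suc l" "2 \<le> l" using \<open>3 \<le> card D\<close> unfolding l_def by auto
  obtain \<theta> where fan: "fan (Suc l) \<theta>" and rays: "D = (\<lambda>i. ray v (\<theta> i)) ` {..<Suc l}"
    and not_antipodal: "\<theta> l - \<theta> 0 \<noteq> pi"
    using fan_of_rays[OF D(1,3) \<open>3 \<le> card D\<close>] unfolding l(1) diff_Suc_1 by blast
  have "\<Union>(pieces_edges \<P>) \<subseteq> (\<Union>j<Suc l. ray v (\<theta> j))"
    using D(2) unfolding rays by (rule Union_mono)
  then obtain a where "\<forall>i<Suc l. \<forall>x\<in>sector v (\<theta> i) (\<theta> (Suc i)). f x = f v + a i \<bullet> (x - v)"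
    using CPA_pieces_affine_on_fan_sectors[OF cpa fan] by blast
  then show ?thesis
    using l fan not_antipodal \<open>card D \<le> card \<P>\<close> by (intro exI[of _ l] exI[of _ \<theta>] exI[of _ a]) auto
qed

lemma CPA_v_function_zero: "CPA_v_function 3 v (\<lambda>x. 0)"
proof -
  have "fan3_affine v 0 1 2 0 0 0 0 = (\<lambda>x. 0)" by (simp add: fan3_affine_def fun_eq_iff)
  then show ?thesis using fan3_affine(4)[of 0 1 2 0 0 0 v 0] pi_gt3 by simp
qed

lemma sum_pad_with_zeros:
  fixes M N :: nat
  assumes "\<forall>n\<in>{1..M}. P (F n)" "P (\<lambda>x. 0)" "M \<le> N"
  shows "\<exists>G. (\<forall>n\<in>{1..N}. P (G n)) \<and> (\<lambda>x. \<Sum>n=1..M. F n x) = (\<lambda>x. \<Sum>n=1..N. G n x)"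
proof (intro exI conjI)
  define G where "G n = (if n \<le> M then F n else (\<lambda>x. 0))" for n
  show "\<forall>n\<in>{1..N}. P (G n)" using assms(1,2) unfolding G_def by auto
  show "(\<lambda>x. \<Sum>n=1..M. F n x) = (\<lambda>x. \<Sum>n=1..N. G n x)"
    using assms(3) unfolding G_def by (intro ext sum.mono_neutral_cong_left) auto
qed

theorem lemma4p2:
  fixes v :: "real^2" and f :: "real^2 \<Rightarrow> real" and p :: nat and \<P> :: "piece set"
  assumes "p \<ge> 3"
    and "CPA_pieces f \<P>" and "card \<P> = p" and "v_function v \<P>"
  shows "\<exists>F :: nat \<Rightarrow> real^2 \<Rightarrow> real.
           (\<forall>n\<in>{1..p-2}. \<exists>\<Q>. CPA_pieces (F n) \<Q> \<and> card \<Q> = 3 \<and> v_function v \<Q>) \<and>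
           f = (\<lambda>x. \<Sum>n=1..p-2. F n x)"
proof -
  obtain l \<theta> a where l: "2 \<le> l" "Suc l \<le> p" and fan: "fan (Suc l) \<theta>" "\<theta> l - \<theta> 0 \<noteq> pi"
    and linear: "\<forall>i\<le>l. \<forall>x\<in>sector v (\<theta> i) (\<theta> (Suc i)). f x = f v + a i \<bullet> (x - v)"
    using v_function_linear_on_fan[OF assms(2,4)] assms(1,3) by blast
  obtain F where F: "\<forall>n\<in>{1..l-1}. CPA_v_function 3 v (F n)" "f = (\<lambda>x. \<Sum>n=1..l-1. F n x)"
    using fan_decomposition[OF fan(1) l(1) fan(2)] linear by blast
  have "l - 1 \<le> p - 2" using l(2) by simp
  then obtain G where "\<forall>n\<in>{1..p-2}. CPA_v_function 3 v (G n)" "f = (\<lambda>x. \<Sum>n=1..p-2. G n x)"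
    using sum_pad_with_zeros[OF F(1) CPA_v_function_zero] F(2) by auto
  then show ?thesis unfolding CPA_v_function_def by blast
qed

end
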